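(* Let $k,n$ be positive integers. The total number of blocks, summed over all $\pi\in NC^k(n)$, equals $\binom{n(k+1)-1}{nk}$.
   Context: A partition $\pi$ of $[N]=\{1,\dots,N\}$ is non-crossing if there are no $1\le a<b<c<d\le N$ with $a,c$ in one block and $b,d$ in another. $NC^k(n)$ is the set of non-crossing partitions of $[kn]$ all of whose blocks have size divisible by $k$. *)

theory Defs
  imports Main "HOL-Library.Disjoint_Sets"
begin

definition noncrossing :: "nat set set \<Rightarrow> bool" where
  "noncrossing P \<longleftrightarrow>
     \<not> (\<exists>B\<in>P. \<exists>C\<in>P. B \<noteq> C \<and>
          (\<exists>a b c d. a < b \<and> b < c \<and> c < d \<and> a \<in> B \<and> c \<in> B \<and> b \<in> C \<and> d \<in> C))"

definition NCk :: "nat \<Rightarrow> nat \<Rightarrow> nat set set set" where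
  "NCk k n = {P. partition_on {1..k*n} P \<and> noncrossing P \<and> (\<forall>B\<in>P. k dvd card B)}"

end

theory Submission
  imports Defs
begin

text \<open>
  Read a partition in \<open>NC\<^sup>k(n)\<close> from left to right. After the first \<open>N\<close> points one sees
  the blocks already completed together with the set \<open>Q\<close> of open points, whose blocks continue
  further right; being non-crossing, no completed block surrounds an open point. The next point
  is either left open, or it completes a block of some size \<open>K = k j\<close>, which then consists of
  it and the \<open>K - 1\<close> largest open points. This yields recurrences for the number of such states
  with \<open>h\<close> open points and for their total number of blocks; writing \<open>N = h + k s\<close>, both are
  solved by explicit binomial expressions, and \<open>h = 0\<close>, \<open>s = n\<close> gives the theorem.
\<close>

section \<open>Closed forms\<close>

lemma sum_recurrence_from_step:
  fixes F E :: "nat \<Rightarrow> nat \<Rightarrow> 'a::comm_monoid_add"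
  assumes step: "\<And>h s. F h (Suc s) = (if h = 0 then 0 else F (h - 1) (Suc s)) + F (h + k) s + E (h + k - 1) s"
    and base: "\<And>h. 0 < h \<Longrightarrow> F h 0 = F (h - 1) 0"
    and "0 < k" "0 < h + s"
  shows "F h s = (if h = 0 then 0 else F (h - 1) s) +
    (\<Sum>j=1..s. F (h + k * j - 1) (s - j) + E (h + k * j - 1) (s - j))"
proof (cases s)
  case 0
  then show ?thesis using base \<open>0 < h + s\<close> by simp
next
  case (Suc s')
  \<comment> \<open>iterate \<open>step\<close> on its middle term\<close>
  have telescope: "F (h + k) s + E (h + k - 1) s =
      (\<Sum>j=1..Suc s. F (h + k * j - 1) (Suc s - j) + E (h + k * j - 1) (Suc s - j))" for h s
  proof (induction s arbitrary: h)
    case 0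
    show ?case using base[of "h + k"] \<open>0 < k\<close> by simp
  next
    case (Suc s)
    have "F (h + k) (Suc s) + E (h + k - 1) (Suc s) =
        F (h + k - 1) (Suc s) + E (h + k - 1) (Suc s) + (F (h + k + k) s + E (h + k + k - 1) s)"
      using step[of "h + k" s] \<open>0 < k\<close> by (simp add: algebra_simps)
    also have "F (h + k + k) s + E (h + k + k - 1) s =
        (\<Sum>j=1..Suc s.
          F (h + k * Suc j - 1) (Suc (Suc s) - Suc j) + E (h + k * Suc j - 1) (Suc (Suc s) - Suc j))"
      unfolding Suc.IH by (intro sum.cong) (simp_all add: algebra_simps)
    also have "\<dots> = (\<Sum>j=Suc 1..Suc (Suc s).
        F (h + k * j - 1) (Suc (Suc s) - j) + E (h + k * j - 1) (Suc (Suc s) - j))"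
      by (rule sum.shift_bounds_cl_Suc_ivl[symmetric])
    finally show ?case by (simp add: sum.atLeast_Suc_atMost del: sum.cl_ivl_Suc)
  qed
  show ?thesis using step[of h s'] telescope[of h s'] Suc by (simp add: add.assoc)
qed

text \<open>With \<open>N = h + k s\<close>, the generalised ballot number
  \<open>ballot k h s = (h + 1) / (N + 1) \<cdot> (N + s choose s)\<close> is the size of \<open>partial_ncs k N h\<close>
  and \<open>block_total k h s\<close> the total number of blocks of its members.\<close>

fun ballot :: "nat \<Rightarrow> nat \<Rightarrow> nat \<Rightarrow> int" where
  "ballot k h 0 = 1"
| "ballot k h (Suc s) =
     int ((h + (k + 1) * Suc s) choose Suc s) - int k * int ((h + (k + 1) * Suc s) choose s)"

fun block_total :: "nat \<Rightarrow> nat \<Rightarrow> nat \<Rightarrow> int" where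
  "block_total k h 0 = 0"
| "block_total k h (Suc s) = int (h + 1) * int ((h + k + (k + 1) * s) choose s)"

lemma Fuss_choose_Suc: "(k + (k + 1) * s) choose Suc s = k * ((k + (k + 1) * s) choose s)"
proof -
  have "Suc s * ((k + (k + 1) * s) choose Suc s) = (k + (k + 1) * s - s) * ((k + (k + 1) * s) choose s)"
    by (metis binomial_absorption binomial_absorb_comp)
  also have "\<dots> = Suc s * (k * ((k + (k + 1) * s) choose s))"
    by (simp add: algebra_simps)
  finally show ?thesis by (metis mult_left_cancel nat.distinct(1))
qed

lemma ballot_Suc: "ballot k h (Suc s) = (if h = 0 then 0 else ballot k (h - 1) (Suc s)) + ballot k (h + k) s"
proof (cases h)
  case 0
  then show ?thesis
    using Fuss_choose_Suc[of k s] by (cases s) (simp_all add: algebra_simps)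
next
  case (Suc h')
  then show ?thesis by (cases s) (simp_all add: algebra_simps)
qed

lemma block_total_Suc:
  assumes "0 < k"
  shows "block_total k h (Suc s) = (if h = 0 then 0 else block_total k (h - 1) (Suc s)) +
     block_total k (h + k) s + ballot k (h + k - 1) s"
  using assms by (cases h; cases s) (simp_all add: algebra_simps)

lemma ballot_rec:
  assumes "0 < k" "0 < h + s"
  shows "ballot k h s =
    (if h = 0 then 0 else ballot k (h - 1) s) + (\<Sum>j=1..s. ballot k (h + k * j - 1) (s - j))"
proof -
  have step: "ballot k h (Suc s) = (if h = 0 then 0 else ballot k (h - 1) (Suc s)) + ballot k (h + k) s + 0"
    for h s using ballot_Suc by simp
  show ?thesis
    using sum_recurrence_from_step[where F = "ballot k" and E = "\<lambda>_ _. 0", OF step _ assms] by simp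
qed

lemma block_total_rec:
  assumes "0 < k" "0 < h + s"
  shows "block_total k h s = (if h = 0 then 0 else block_total k (h - 1) s) +
    (\<Sum>j=1..s. block_total k (h + k * j - 1) (s - j) + ballot k (h + k * j - 1) (s - j))"
  using sum_recurrence_from_step[where F = "block_total k" and E = "ballot k",
      OF block_total_Suc[OF assms(1)] _ assms]
  by simp

definition final_segment :: "nat set \<Rightarrow> nat set \<Rightarrow> bool" where
  "final_segment U A \<longleftrightarrow> U \<subseteq> A \<and> (\<forall>x\<in>U. \<forall>y\<in>A. x < y \<longrightarrow> y \<in> U)"

definition top_elems :: "nat \<Rightarrow> nat set \<Rightarrow> nat set" where
  "top_elems m A = {x\<in>A. card {y\<in>A. x < y} < m}"

lemma top_elems_card_final_segment:
  assumes "finite A" "final_segment U A"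
  shows "top_elems (card U) A = U"
proof (intro set_eqI iffI)
  have U: "U \<subseteq> A" "\<And>x y. x \<in> U \<Longrightarrow> y \<in> A \<Longrightarrow> x < y \<Longrightarrow> y \<in> U"
    using assms(2) unfolding final_segment_def by auto
  have "finite U" using U(1) assms(1) finite_subset by blast
  fix x
  show "x \<in> U" if x: "x \<in> top_elems (card U) A"
  proof (rule ccontr)
    assume "x \<notin> U"
    have "U \<subseteq> {y\<in>A. x < y}"
    proof
      fix u assume "u \<in> U"
      with U \<open>x \<notin> U\<close> x have "u \<in> A" "u \<noteq> x" "\<not> u < x" unfolding top_elems_def by auto
      then show "u \<in> {y\<in>A. x < y}" by auto
    qed
    then have "card U \<le> card {y\<in>A. x < y}" using assms(1) by (intro card_mono) auto
    then show False using x unfolding top_elems_def by auto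
  qed
  show "x \<in> top_elems (card U) A" if x: "x \<in> U"
  proof -
    have "{y\<in>A. x < y} \<subseteq> U - {x}" using U x by auto
    then have "card {y\<in>A. x < y} \<le> card (U - {x})" using \<open>finite U\<close> by (intro card_mono) auto
    also have "\<dots> < card U" using \<open>finite U\<close> x by (rule card_Diff1_less)
    finally show ?thesis using x U(1) unfolding top_elems_def by auto
  qed
qed

lemma final_segment_exists:
  assumes "finite A" "m \<le> card A"
  shows "\<exists>U. final_segment U A \<and> card U = m"
  using assms(2)
proof (induction m)
  case 0
  show ?case by (auto simp: final_segment_def intro!: exI[of _ "{}"])
next
  case (Suc m)
  then obtain U where U: "final_segment U A" "card U = m" by auto
  then have "U \<subseteq> A" "finite U" using assms(1) finite_subset unfolding final_segment_def by auto
  then have "A - U \<noteq> {}" using U(2) Suc.prems by auto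
  define z where "z = Max (A - U)"
  have "finite (A - U)" using assms(1) by simp
  then have z: "z \<in> A - U" "\<And>y. y \<in> A - U \<Longrightarrow> y \<le> z"
    using Max_in Max_ge \<open>A - U \<noteq> {}\<close> unfolding z_def by blast+
  have "y \<in> U" if "y \<in> A" "z < y" for y
    using z(2)[of y] that by (meson DiffI not_le)
  then have "final_segment (insert z U) A"
    using U(1) z(1) unfolding final_segment_def by blast
  moreover have "card (insert z U) = Suc m" using z \<open>finite U\<close> U(2) by auto
  ultimately show ?case by blast
qed

lemma final_segment_top_elems:
  assumes "finite A" "m \<le> card A"
  shows "final_segment (top_elems m A) A" "card (top_elems m A) = m"
proof -
  obtain U where "final_segment U A" "card U = m" using final_segment_exists[OF assms] by blast
  moreover have "top_elems m A = U" using top_elems_card_final_segment[OF assms(1)] calculation by blast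
  ultimately show "final_segment (top_elems m A) A" "card (top_elems m A) = m" by simp_all
qed

definition block_of :: "'a set set \<Rightarrow> 'a \<Rightarrow> 'a set" where
  "block_of P x = (THE B. B \<in> P \<and> x \<in> B)"

lemma block_of_eq:
  assumes "disjoint P" "B \<in> P" "x \<in> B"
  shows "block_of P x = B"
  unfolding block_of_def using assms unfolding disjoint_def by (intro the_equality) blast+

lemma block_of_in:
  assumes "partition_on A P" "x \<in> A"
  shows "block_of P x \<in> P" "x \<in> block_of P x"
proof -
  obtain B where "B \<in> P" "x \<in> B" using assms unfolding partition_on_def by blast
  moreover have "block_of P x = B"
    using block_of_eq[of P B x] calculation assms(1) by (simp add: partition_on_def)
  ultimately show "block_of P x \<in> P" "x \<in> block_of P x" by auto
qed

section \<open>Partial non-crossing partitions\<close>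

text \<open>\<open>(P, Q)\<close> is the trace on \<open>{1..N}\<close> of a larger partition: \<open>P\<close> holds the blocks
  inside \<open>{1..N}\<close>, \<open>Q\<close> the points whose blocks reach beyond \<open>N\<close>.\<close>

type_synonym nc_state = "nat set set \<times> nat set"

definition partial_nc :: "nat \<Rightarrow> nat \<Rightarrow> nat set set \<Rightarrow> nat set \<Rightarrow> bool" where
  "partial_nc k N P Q \<longleftrightarrow> Q \<subseteq> {1..N} \<and> partition_on ({1..N} - Q) P \<and> noncrossing P \<and>
     (\<forall>B\<in>P. k dvd card B) \<and> (\<forall>u\<in>Q. \<forall>B\<in>P. \<forall>b\<in>B. \<forall>b'\<in>B. \<not> (b < u \<and> u < b'))"

definition partial_ncs :: "nat \<Rightarrow> nat \<Rightarrow> nat \<Rightarrow> nc_state set" where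
  "partial_ncs k N h = {(P, Q). partial_nc k N P Q \<and> card Q = h}"

lemma noncrossingI:
  assumes "\<And>X Y a b c d. X \<in> P \<Longrightarrow> Y \<in> P \<Longrightarrow> X \<noteq> Y \<Longrightarrow> a < b \<Longrightarrow> b < c \<Longrightarrow> c < d \<Longrightarrow>
    a \<in> X \<Longrightarrow> c \<in> X \<Longrightarrow> b \<in> Y \<Longrightarrow> d \<in> Y \<Longrightarrow> False"
  shows "noncrossing P"
  unfolding noncrossing_def using assms by meson

lemma noncrossingD:
  "noncrossing P \<Longrightarrow> X \<in> P \<Longrightarrow> Y \<in> P \<Longrightarrow> X \<noteq> Y \<Longrightarrow> a < b \<Longrightarrow> b < c \<Longrightarrow> c < d \<Longrightarrow>
    a \<in> X \<Longrightarrow> c \<in> X \<Longrightarrow> b \<in> Y \<Longrightarrow> d \<in> Y \<Longrightarrow> False"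
  unfolding noncrossing_def by meson

lemma noncrossing_subset: "noncrossing P \<Longrightarrow> P' \<subseteq> P \<Longrightarrow> noncrossing P'"
  unfolding noncrossing_def by (meson subsetD)

lemma partial_ncI:
  assumes "Q \<subseteq> {1..N}" "partition_on ({1..N} - Q) P" "noncrossing P"
    "\<And>B. B \<in> P \<Longrightarrow> k dvd card B"
    "\<And>u B b b'. u \<in> Q \<Longrightarrow> B \<in> P \<Longrightarrow> b \<in> B \<Longrightarrow> b' \<in> B \<Longrightarrow> b < u \<Longrightarrow> u < b' \<Longrightarrow> False"
  shows "partial_nc k N P Q"
  using assms unfolding partial_nc_def by blast

lemma partial_ncD:
  assumes "partial_nc k N P Q"
  shows "Q \<subseteq> {1..N}" "partition_on ({1..N} - Q) P" "noncrossing P"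
    "\<And>B. B \<in> P \<Longrightarrow> k dvd card B"
    "\<And>u B b b'. u \<in> Q \<Longrightarrow> B \<in> P \<Longrightarrow> b \<in> B \<Longrightarrow> b' \<in> B \<Longrightarrow> b < u \<Longrightarrow> u < b' \<Longrightarrow> False"
  using assms unfolding partial_nc_def by blast+

lemma partial_nc_block_subset:
  assumes "partial_nc k N P Q" "B \<in> P"
  shows "B \<subseteq> {1..N} - Q"
  using partition_onD1[OF partial_ncD(2)[OF assms(1)]] assms(2) by blast

lemma partial_nc_block_card:
  assumes "partial_nc k N P Q" "B \<in> P"
  shows "card B + card Q \<le> N"
proof -
  have "card B \<le> card ({1..N} - Q)"
    using partial_nc_block_subset[OF assms] by (intro card_mono) auto
  also have "\<dots> = N - card Q"
    using partial_ncD(1)[OF assms(1)] by (simp add: card_Diff_subset finite_subset)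
  finally show ?thesis
    using card_mono[OF _ partial_ncD(1)[OF assms(1)]] by simp
qed

lemma finite_partial_ncs: "finite (partial_ncs k N h)"
proof (rule finite_subset)
  show "partial_ncs k N h \<subseteq> Pow (Pow {1..N}) \<times> Pow {1..N}"
  proof
    fix x assume "x \<in> partial_ncs k N h"
    then obtain P Q where x: "x = (P, Q)" and pq: "partial_nc k N P Q" unfolding partial_ncs_def by blast
    then show "x \<in> Pow (Pow {1..N}) \<times> Pow {1..N}"
      using partial_nc_block_subset[OF pq] partial_ncD(1)[OF pq] by blast
  qed
qed simp

lemma partial_ncs_0: "partial_ncs k 0 0 = {({}, {})}"
proof -
  have "partial_nc k 0 P Q \<longleftrightarrow> P = {} \<and> Q = {}" for P Q
    unfolding partial_nc_def noncrossing_def by (auto simp: partition_on_empty)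
  then show ?thesis unfolding partial_ncs_def by auto
qed

lemma partial_nc_no_open:
  "partial_nc k N P {} \<longleftrightarrow> partition_on {1..N} P \<and> noncrossing P \<and> (\<forall>B\<in>P. k dvd card B)"
  unfolding partial_nc_def by simp

section \<open>Adding the last point\<close>

lemma partial_nc_insert_last:
  "partial_nc k (Suc M) P (insert (Suc M) Q) \<longleftrightarrow> partial_nc k M P (Q - {Suc M})"
proof
  have eq: "{1..Suc M} - insert (Suc M) Q = {1..M} - (Q - {Suc M})" by auto
  show "partial_nc k M P (Q - {Suc M})" if pN: "partial_nc k (Suc M) P (insert (Suc M) Q)"
  proof (rule partial_ncI)
    show "Q - {Suc M} \<subseteq> {1..M}" using partial_ncD(1)[OF pN] by (auto simp: le_Suc_eq)
    show "partition_on ({1..M} - (Q - {Suc M})) P" using partial_ncD(2)[OF pN] by (simp only: eq)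
  qed (use partial_ncD(3-5)[OF pN] in blast)+
  show "partial_nc k (Suc M) P (insert (Suc M) Q)" if pM: "partial_nc k M P (Q - {Suc M})"
  proof (rule partial_ncI)
    show "insert (Suc M) Q \<subseteq> {1..Suc M}" using partial_ncD(1)[OF pM] by auto
    show "partition_on ({1..Suc M} - insert (Suc M) Q) P" using partial_ncD(2)[OF pM] by (simp only: eq)
    fix u B b b' assume "u \<in> insert (Suc M) Q" and B: "B \<in> P" "b \<in> B" "b' \<in> B"
      and "b < u" "u < b'"
    moreover have "b' \<le> M" using partial_nc_block_subset[OF pM B(1)] B(3) by auto
    ultimately show False using partial_ncD(5)[OF pM _ B] by fastforce
  qed (use partial_ncD(3,4)[OF pM] in blast)+
qed

lemma noncrossing_insert_last_block:
  assumes nc: "noncrossing P" and below: "\<And>C c. C \<in> P \<Longrightarrow> c \<in> C \<Longrightarrow> c < N"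
    and not_surrounded: "\<And>u C b b'. u \<in> U \<Longrightarrow> C \<in> P \<Longrightarrow> b \<in> C \<Longrightarrow> b' \<in> C \<Longrightarrow>
      b < u \<Longrightarrow> u < b' \<Longrightarrow> False"
  shows "noncrossing (insert (insert N U) P)"
proof (rule noncrossingI)
  fix X Y a b c d
  assume X: "X \<in> insert (insert N U) P" and Y: "Y \<in> insert (insert N U) P" and "X \<noteq> Y"
    and abcd: "a < b" "b < c" "c < d" and ac: "a \<in> X" "c \<in> X" and bd: "b \<in> Y" "d \<in> Y"
  consider "X = insert N U" "Y \<in> P" | "X \<in> P" "Y = insert N U" | "X \<in> P" "Y \<in> P"
    using X Y \<open>X \<noteq> Y\<close> by blast
  then show False
  proof cases
    case 1
    then have "c \<in> U" using ac(2) below[of Y d] bd(2) abcd(3) by auto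
    then show False using not_surrounded[OF _ 1(2) bd] abcd by auto
  next
    case 2
    then have "b \<in> U" using bd(1) below[of X c] ac(2) abcd(2) by auto
    then show False using not_surrounded[OF _ 2(1) ac] abcd by auto
  next
    case 3
    then show False using noncrossingD[OF nc _ _ \<open>X \<noteq> Y\<close> abcd ac bd] by blast
  qed
qed

lemma partial_nc_close_block:
  assumes pM: "partial_nc k M P Q" and U: "final_segment U Q"
    and dvd: "k dvd card (insert (Suc M) U)"
  shows "partial_nc k (Suc M) (insert (insert (Suc M) U) P) (Q - U)"
proof -
  define B where "B = insert (Suc M) U"
  have UQ: "U \<subseteq> Q" and Qsub: "Q \<subseteq> {1..M}"
    using U partial_ncD(1)[OF pM] unfolding final_segment_def by auto
  have below: "c < Suc M" if "C \<in> P" "c \<in> C" for C c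
    using partial_nc_block_subset[OF pM that(1)] that(2) by auto
  have part: "partition_on ({1..Suc M} - (Q - U)) (insert B P)"
  proof (subst partition_on_insert)
    show "disjnt B (\<Union>P)"
      using below UQ Qsub partial_nc_block_subset[OF pM] unfolding B_def disjnt_def by blast
    have "{1..Suc M} - (Q - U) - B = {1..M} - Q" using UQ Qsub unfolding B_def by auto
    then show "partition_on ({1..Suc M} - (Q - U) - B) P \<and> B \<subseteq> {1..Suc M} - (Q - U) \<and> B \<noteq> {}"
      using partial_ncD(2)[OF pM] UQ Qsub unfolding B_def by auto
  qed
  show ?thesis
  proof (rule partial_ncI)
    show "Q - U \<subseteq> {1..Suc M}" using Qsub by auto
    show "partition_on ({1..Suc M} - (Q - U)) (insert (insert (Suc M) U) P)"
      using part unfolding B_def .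
    show "noncrossing (insert (insert (Suc M) U) P)"
    proof (rule noncrossing_insert_last_block)
      show "noncrossing P" by (rule partial_ncD(3)[OF pM])
    qed (use below partial_ncD(5)[OF pM] UQ in blast)+
    show "k dvd card C" if "C \<in> insert (insert (Suc M) U) P" for C
      using that dvd partial_ncD(4)[OF pM] by blast
  next
    fix u C b b' assume u: "u \<in> Q - U" and C: "C \<in> insert (insert (Suc M) U) P"
      and b: "b \<in> C" "b' \<in> C" "b < u" "u < b'"
    show False
    proof (cases "C \<in> P")
      case True
      then show False using partial_ncD(5)[OF pM _ True b(1,2)] u b(3,4) by blast
    next
      case False
      then have "b \<in> U" using C b u Qsub by auto
      then show False using U u b(3) unfolding final_segment_def by blast
    qed
  qed
qed

lemma partial_nc_remove_last_block:
  assumes pN: "partial_nc k (Suc M) P Q" and B: "B \<in> P" "Suc M \<in> B"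
  shows "partial_nc k M (P - {B}) (Q \<union> (B - {Suc M}))"
    and "final_segment (B - {Suc M}) (Q \<union> (B - {Suc M}))"
proof -
  have Bsub: "B \<subseteq> {1..Suc M} - Q" by (rule partial_nc_block_subset[OF pN B(1)])
  have Qsub: "Q \<subseteq> {1..Suc M}" by (rule partial_ncD(1)[OF pN])
  have last_closed: "Suc M \<notin> Q" using Bsub B(2) by blast
  have disj: "C \<inter> B = {}" if "C \<in> P - {B}" for C
    using disjointD[OF partition_onD2[OF partial_ncD(2)[OF pN]]] that B(1) by blast
  have C_below: "c < Suc M" if "C \<in> P - {B}" "c \<in> C" for C c
    using partial_nc_block_subset[OF pN, of C] disj[OF that(1)] B(2) that by fastforce
  have part: "partition_on ({1..Suc M} - Q - B) (P - {B})"
  proof -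
    have "disjnt B (\<Union>(P - {B}))" using disj unfolding disjnt_def by blast
    moreover have "insert B (P - {B}) = P" using B(1) by blast
    ultimately show ?thesis using partial_ncD(2)[OF pN] partition_on_insert by metis
  qed
  show "partial_nc k M (P - {B}) (Q \<union> (B - {Suc M}))"
  proof (rule partial_ncI)
    have "Q \<union> (B - {Suc M}) \<subseteq> {1..Suc M} - {Suc M}" using Qsub Bsub last_closed by blast
    then show "Q \<union> (B - {Suc M}) \<subseteq> {1..M}" by auto
    have "{1..Suc M} - Q - B = {1..M} - (Q \<union> (B - {Suc M}))" using B(2) by (auto simp: le_Suc_eq)
    then show "partition_on ({1..M} - (Q \<union> (B - {Suc M}))) (P - {B})" using part by simp
    show "noncrossing (P - {B})" using noncrossing_subset[OF partial_ncD(3)[OF pN]] by blast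
    show "k dvd card C" if "C \<in> P - {B}" for C using partial_ncD(4)[OF pN] that by blast
  next
    fix u C b b' assume u: "u \<in> Q \<union> (B - {Suc M})" and C: "C \<in> P - {B}"
      and b: "b \<in> C" "b' \<in> C" "b < u" "u < b'"
    show False
    proof (cases "u \<in> Q")
      case True
      then show False using partial_ncD(5)[OF pN _ _ b(1,2)] C b(3,4) by blast
    next
      case False
      then have "u \<in> B" using u by blast
      moreover have "C \<noteq> B" using C by blast
      ultimately show False
        using noncrossingD[OF partial_ncD(3)[OF pN], of C B b u b' "Suc M"] C b C_below[OF C b(2)] B by blast
    qed
  qed
  show "final_segment (B - {Suc M}) (Q \<union> (B - {Suc M}))"
    unfolding final_segment_def
  proof (intro conjI ballI impI)
    fix z y assume z: "z \<in> B - {Suc M}" and y: "y \<in> Q \<union> (B - {Suc M})" and "z < y"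
    show "y \<in> B - {Suc M}"
    proof (rule ccontr)
      assume "y \<notin> B - {Suc M}"
      then have "y \<in> Q" using y by blast
      moreover have "y < Suc M"
        using calculation Qsub last_closed by (metis atLeastAtMost_iff le_neq_implies_less subsetD)
      ultimately show False using partial_ncD(5)[OF pN _ B(1)] z B(2) \<open>z < y\<close> by blast
    qed
  qed blast
qed

lemma partial_nc_last_block:
  assumes "partial_nc k N P Q" "N \<notin> Q" "0 < N"
  shows "block_of P N \<in> P" "N \<in> block_of P N"
  using block_of_in[OF partial_ncD(2)[OF assms(1)]] assms(2,3) by auto

fun add_open :: "nat \<Rightarrow> nc_state \<Rightarrow> nc_state" where
  "add_open N (P, Q) = (P, insert N Q)"

lemma fst_add_open [simp]: "fst (add_open N y) = fst y"
  by (cases y) simp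

fun close_block :: "nat \<Rightarrow> nat \<Rightarrow> nc_state \<Rightarrow> nc_state" where
  "close_block N K (P, Q) = (insert (insert N (top_elems (K - 1) Q)) P, Q - top_elems (K - 1) Q)"

fun reopen_block :: "nat \<Rightarrow> nc_state \<Rightarrow> nc_state" where
  "reopen_block N (P, Q) = (P - {block_of P N}, Q \<union> (block_of P N - {N}))"

definition last_open_ncs :: "nat \<Rightarrow> nat \<Rightarrow> nat \<Rightarrow> nc_state set" where
  "last_open_ncs k N h = {x \<in> partial_ncs k N h. N \<in> snd x}"

definition last_block_ncs :: "nat \<Rightarrow> nat \<Rightarrow> nat \<Rightarrow> nat \<Rightarrow> nc_state set" where
  "last_block_ncs k N h K = {x \<in> partial_ncs k N h. N \<notin> snd x \<and> card (block_of (fst x) N) = K}"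

lemma partial_ncsD:
  assumes "(P, Q) \<in> partial_ncs k N h"
  shows "partial_nc k N P Q" "card Q = h" "finite Q"
proof -
  show pq: "partial_nc k N P Q" "card Q = h" using assms unfolding partial_ncs_def by auto
  show "finite Q" using partial_ncD(1)[OF pq(1)] by (rule finite_subset) simp
qed

lemma bij_betw_add_open:
  "bij_betw (add_open (Suc M)) (partial_ncs k M h) (last_open_ncs k (Suc M) (Suc h))"
proof (rule bij_betw_byWitness[where f' = "\<lambda>(P, Q). (P, Q - {Suc M})"])
  have last_not_open: "Suc M \<notin> Q" if "(P, Q) \<in> partial_ncs k M h" for P Q
    using partial_ncD(1)[OF partial_ncsD(1)[OF that]] by auto
  show "\<forall>x\<in>partial_ncs k M h. (\<lambda>(P, Q). (P, Q - {Suc M})) (add_open (Suc M) x) = x"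
    using last_not_open by auto
  show "\<forall>x\<in>last_open_ncs k (Suc M) (Suc h).
      add_open (Suc M) ((\<lambda>(P, Q). (P, Q - {Suc M})) x) = x"
    by (auto simp: last_open_ncs_def insert_absorb)
  show "add_open (Suc M) ` partial_ncs k M h \<subseteq> last_open_ncs k (Suc M) (Suc h)"
  proof (rule image_subsetI)
    fix x assume "x \<in> partial_ncs k M h"
    moreover obtain P Q where x: "x = (P, Q)" by fastforce
    ultimately have PQ: "(P, Q) \<in> partial_ncs k M h" by simp
    have "partial_nc k (Suc M) P (insert (Suc M) Q)"
      using partial_ncsD[OF PQ] last_not_open[OF PQ] partial_nc_insert_last[of k M P Q] by simp
    then show "add_open (Suc M) x \<in> last_open_ncs k (Suc M) (Suc h)"
      using partial_ncsD[OF PQ] last_not_open[OF PQ] by (simp add: x partial_ncs_def last_open_ncs_def)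
  qed
  show "(\<lambda>(P, Q). (P, Q - {Suc M})) ` last_open_ncs k (Suc M) (Suc h) \<subseteq> partial_ncs k M h"
  proof (rule image_subsetI)
    fix x assume x_in: "x \<in> last_open_ncs k (Suc M) (Suc h)"
    obtain P Q where x: "x = (P, Q)" by fastforce
    have PQ: "(P, Q) \<in> partial_ncs k (Suc M) (Suc h)" "Suc M \<in> Q"
      using x_in x unfolding last_open_ncs_def by auto
    then have "partial_nc k M P (Q - {Suc M})"
      using partial_ncsD[OF PQ(1)] partial_nc_insert_last[of k M P Q] by (simp add: insert_absorb)
    then show "(\<lambda>(P, Q). (P, Q - {Suc M})) x \<in> partial_ncs k M h"
      using partial_ncsD[OF PQ(1)] PQ(2) by (simp add: x partial_ncs_def)
  qed
qed

lemma close_block_mem: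
  assumes PQ: "(P, Q) \<in> partial_ncs k M (h + K - 1)" and K: "0 < K" "k dvd K"
  shows "close_block (Suc M) K (P, Q) \<in> last_block_ncs k (Suc M) h K"
    and "reopen_block (Suc M) (close_block (Suc M) K (P, Q)) = (P, Q)"
proof -
  define U where "U = top_elems (K - 1) Q"
  define B where "B = insert (Suc M) U"
  note pq = partial_ncsD[OF PQ]
  have U: "final_segment U Q" "card U = K - 1"
    using final_segment_top_elems[OF pq(3), of "K - 1"] pq(2) unfolding U_def by auto
  have UQ: "U \<subseteq> Q" using U(1) unfolding final_segment_def by blast
  have last_not_open: "Suc M \<notin> Q" using partial_ncD(1)[OF pq(1)] by auto
  have "Suc M \<notin> U" using UQ last_not_open by blast
  then have card_B: "card B = K"
    using U(2) finite_subset[OF UQ pq(3)] K(1) unfolding B_def by simp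
  have pN: "partial_nc k (Suc M) (insert B P) (Q - U)"
    using partial_nc_close_block[OF pq(1) U(1)] card_B K(2) unfolding B_def by simp
  have block_B: "block_of (insert B P) (Suc M) = B"
    using block_of_eq[OF partition_onD2[OF partial_ncD(2)[OF pN]]] unfolding B_def by blast
  have "card (Q - U) = h" using pq(2,3) U(2) UQ K(1) by (simp add: card_Diff_subset finite_subset)
  then show "close_block (Suc M) K (P, Q) \<in> last_block_ncs k (Suc M) h K"
    using pN block_B card_B last_not_open unfolding last_block_ncs_def partial_ncs_def U_def B_def
    by simp
  have "B \<notin> P" using partial_nc_block_subset[OF pq(1)] unfolding B_def by fastforce
  moreover have "Q - U \<union> (B - {Suc M}) = Q" using UQ last_not_open unfolding B_def by auto
  ultimately show "reopen_block (Suc M) (close_block (Suc M) K (P, Q)) = (P, Q)"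
    using block_B unfolding U_def B_def by simp
qed

lemma reopen_block_mem:
  assumes PQ: "(P, Q) \<in> partial_ncs k (Suc M) h" and last_closed: "Suc M \<notin> Q"
    and K: "card (block_of P (Suc M)) = K"
  shows "reopen_block (Suc M) (P, Q) \<in> partial_ncs k M (h + K - 1)"
    and "close_block (Suc M) K (reopen_block (Suc M) (P, Q)) = (P, Q)"
proof -
  define B where "B = block_of P (Suc M)"
  define Q' where "Q' = Q \<union> (B - {Suc M})"
  note pq = partial_ncsD[OF PQ]
  have B: "B \<in> P" "Suc M \<in> B" using partial_nc_last_block[OF pq(1) last_closed] unfolding B_def by auto
  have pM: "partial_nc k M (P - {B}) Q'" and seg: "final_segment (B - {Suc M}) Q'"
    using partial_nc_remove_last_block[OF pq(1) B] unfolding Q'_def by auto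
  have finB: "finite B" using partial_nc_block_subset[OF pq(1) B(1)] finite_subset by blast
  have QB: "Q \<inter> B = {}" using partial_nc_block_subset[OF pq(1) B(1)] by blast
  have card_B: "card (B - {Suc M}) = K - 1" using K B(2) finB unfolding B_def by simp
  have "card Q' = h + (K - 1)"
    unfolding Q'_def using pq(2,3) finB QB card_B by (subst card_Un_disjoint) auto
  moreover have "0 < K" using K B(2) finB card_gt_0_iff unfolding B_def by blast
  ultimately show "reopen_block (Suc M) (P, Q) \<in> partial_ncs k M (h + K - 1)"
    using pM unfolding partial_ncs_def Q'_def B_def by simp
  have "top_elems (K - 1) Q' = B - {Suc M}"
    using top_elems_card_final_segment[OF _ seg] card_B pq(3) finB unfolding Q'_def by simp
  moreover have "insert (Suc M) (B - {Suc M}) = B" "insert B (P - {B}) = P" using B by auto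
  moreover have "Q' - (B - {Suc M}) = Q" using QB unfolding Q'_def by auto
  ultimately show "close_block (Suc M) K (reopen_block (Suc M) (P, Q)) = (P, Q)"
    unfolding Q'_def B_def by simp
qed

lemma bij_betw_close_block:
  assumes "0 < K" "k dvd K"
  shows "bij_betw (close_block (Suc M) K) (partial_ncs k M (h + K - 1)) (last_block_ncs k (Suc M) h K)"
proof (rule bij_betw_byWitness[where f' = "reopen_block (Suc M)"])
  show "\<forall>x\<in>partial_ncs k M (h + K - 1). reopen_block (Suc M) (close_block (Suc M) K x) = x"
  proof
    fix x assume "x \<in> partial_ncs k M (h + K - 1)"
    then show "reopen_block (Suc M) (close_block (Suc M) K x) = x"
      using close_block_mem(2)[OF _ assms, of "fst x" "snd x"] by simp
  qed
  show "close_block (Suc M) K ` partial_ncs k M (h + K - 1) \<subseteq> last_block_ncs k (Suc M) h K"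
  proof (rule image_subsetI)
    fix x assume "x \<in> partial_ncs k M (h + K - 1)"
    then show "close_block (Suc M) K x \<in> last_block_ncs k (Suc M) h K"
      using close_block_mem(1)[OF _ assms, of "fst x" "snd x"] by simp
  qed
  show "\<forall>x\<in>last_block_ncs k (Suc M) h K.
      close_block (Suc M) K (reopen_block (Suc M) x) = x"
  proof
    fix x assume "x \<in> last_block_ncs k (Suc M) h K"
    then show "close_block (Suc M) K (reopen_block (Suc M) x) = x"
      using reopen_block_mem(2)[of "fst x" "snd x" k M h K] by (simp add: last_block_ncs_def)
  qed
  show "reopen_block (Suc M) ` last_block_ncs k (Suc M) h K
      \<subseteq> partial_ncs k M (h + K - 1)"
  proof (rule image_subsetI)
    fix x assume "x \<in> last_block_ncs k (Suc M) h K"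
    then show "reopen_block (Suc M) x \<in> partial_ncs k M (h + K - 1)"
      using reopen_block_mem(1)[of "fst x" "snd x" k M h K] by (simp add: last_block_ncs_def)
  qed
qed

lemma partial_ncs_Suc_eq:
  assumes k: "0 < k" and M: "Suc M = h + k * s"
  shows "partial_ncs k (Suc M) h =
    last_open_ncs k (Suc M) h \<union> (\<Union>j\<in>{1..s}. last_block_ncs k (Suc M) h (k * j))"
proof -
  have "\<exists>j\<in>{1..s}. card (block_of P (Suc M)) = k * j"
    if PQ: "(P, Q) \<in> partial_ncs k (Suc M) h" and "Suc M \<notin> Q" for P Q
  proof -
    note pq = partial_ncsD[OF PQ]
    define B where "B = block_of P (Suc M)"
    have B: "B \<in> P" "Suc M \<in> B"
      using partial_nc_last_block[OF pq(1) \<open>Suc M \<notin> Q\<close>] unfolding B_def by auto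
    obtain j where j: "card B = k * j" using partial_ncD(4)[OF pq(1) B(1)] by (auto elim!: dvdE)
    have "finite B" using partial_nc_block_subset[OF pq(1) B(1)] finite_subset by blast
    then have "0 < j" using B(2) j by (cases j) auto
    moreover have "j \<le> s" using partial_nc_block_card[OF pq(1) B(1)] pq(2) M j k by simp
    ultimately show ?thesis using j unfolding B_def by auto
  qed
  then show ?thesis unfolding last_open_ncs_def last_block_ncs_def by fastforce
qed

lemma sum_partial_ncs_Suc:
  fixes G :: "nc_state \<Rightarrow> 'a::comm_monoid_add"
  assumes k: "0 < k" and M: "Suc M = h + k * s"
  shows "(\<Sum>x\<in>partial_ncs k (Suc M) h. G x) =
    (if h = 0 then 0 else (\<Sum>y\<in>partial_ncs k M (h - 1). G (add_open (Suc M) y))) +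
    (\<Sum>j=1..s. \<Sum>y\<in>partial_ncs k M (h + k * j - 1). G (close_block (Suc M) (k * j) y))"
proof -
  have fin: "finite (last_open_ncs k (Suc M) h)" "finite (last_block_ncs k (Suc M) h K)" for K
    using finite_partial_ncs unfolding last_open_ncs_def last_block_ncs_def by simp_all
  have "(\<Sum>x\<in>partial_ncs k (Suc M) h. G x) = (\<Sum>x\<in>last_open_ncs k (Suc M) h. G x) +
      (\<Sum>j=1..s. \<Sum>x\<in>last_block_ncs k (Suc M) h (k * j). G x)"
    unfolding partial_ncs_Suc_eq[OF k M]
    using k fin
    by (subst sum.union_disjoint sum.UNION_disjoint; auto simp: last_open_ncs_def last_block_ncs_def)+
  also have "(\<Sum>x\<in>last_open_ncs k (Suc M) h. G x) =
      (if h = 0 then 0 else (\<Sum>y\<in>partial_ncs k M (h - 1). G (add_open (Suc M) y)))"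
  proof (cases h)
    case 0
    have "snd x = {}" if "x \<in> partial_ncs k (Suc M) 0" for x
      using partial_ncsD(2,3)[of "fst x" "snd x" k "Suc M" 0] that by simp
    then have "last_open_ncs k (Suc M) 0 = {}" unfolding last_open_ncs_def by fastforce
    then show ?thesis using 0 by simp
  next
    case (Suc h')
    then show ?thesis using sum.reindex_bij_betw[OF bij_betw_add_open[of M k h'], of G] by simp
  qed
  also have "(\<Sum>j=1..s. \<Sum>x\<in>last_block_ncs k (Suc M) h (k * j). G x) =
      (\<Sum>j=1..s. \<Sum>y\<in>partial_ncs k M (h + k * j - 1). G (close_block (Suc M) (k * j) y))"
  proof (rule sum.cong[OF refl])
    fix j assume "j \<in> {1..s}"
    then have "0 < k * j" using k by auto
    then show "(\<Sum>x\<in>last_block_ncs k (Suc M) h (k * j). G x) =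
        (\<Sum>y\<in>partial_ncs k M (h + k * j - 1). G (close_block (Suc M) (k * j) y))"
      using sum.reindex_bij_betw[OF bij_betw_close_block[OF \<open>0 < k * j\<close> dvd_triv_left], of G]
      by simp
  qed
  finally show ?thesis .
qed

section \<open>Counting\<close>

lemma card_fst_close_block:
  assumes "y \<in> partial_ncs k M h"
  shows "card (fst (close_block (Suc M) K y)) = Suc (card (fst y))"
proof -
  obtain P Q where y: "y = (P, Q)" by fastforce
  have "P \<subseteq> Pow {1..M}"
    using partial_nc_block_subset[OF partial_ncsD(1)[OF assms[unfolded y]]] by blast
  then have "finite P" "insert (Suc M) (top_elems (K - 1) Q) \<notin> P" using finite_subset by auto
  then show ?thesis unfolding y by simp
qed

lemma Suc_eq_add_mult_split:
  assumes k: "0 < k" and M: "Suc M = h + k * s"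
  shows "0 < h + s" "0 < h \<Longrightarrow> M = (h - 1) + k * s"
    "j \<in> {1..s} \<Longrightarrow> M = (h + k * j - 1) + k * (s - j)"
proof -
  show "0 < h + s" using M by (cases s) auto
  show "0 < h \<Longrightarrow> M = (h - 1) + k * s" using M by simp
  assume "j \<in> {1..s}"
  then have "k * j \<le> k * s" "1 \<le> k * j" using k by auto
  then show "M = (h + k * j - 1) + k * (s - j)" using M unfolding diff_mult_distrib2 by linarith
qed

lemma card_partial_ncs:
  assumes k: "0 < k"
  shows "int (card (partial_ncs k (h + k * s) h)) = ballot k h s"
proof (induction "h + k * s" arbitrary: h s)
  case 0
  then show ?case using k by (simp add: partial_ncs_0)
next
  case (Suc M)
  note M = Suc_eq_add_mult_split[OF k Suc.hyps(2)]
  have IH: "int (card (partial_ncs k M h')) = ballot k h' s'" if "M = h' + k * s'" for h' s'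
    using Suc.hyps(1)[OF that] that by simp
  have "int (card (partial_ncs k (Suc M) h)) =
      (if h = 0 then 0 else int (card (partial_ncs k M (h - 1)))) +
      (\<Sum>j=1..s. int (card (partial_ncs k M (h + k * j - 1))))"
    using sum_partial_ncs_Suc[OF k Suc.hyps(2), of "\<lambda>_. 1 :: int"] by simp
  also have "\<dots> = (if h = 0 then 0 else ballot k (h - 1) s) +
      (\<Sum>j=1..s. ballot k (h + k * j - 1) (s - j))"
    using IH[OF M(2)] IH[OF M(3)] by (intro arg_cong2[where f = "(+)"] sum.cong) auto
  also have "\<dots> = ballot k h s" using ballot_rec[OF k M(1)] by simp
  finally show ?case using Suc.hyps(2) by simp
qed

lemma sum_card_partial_ncs:
  assumes k: "0 < k"
  shows "int (\<Sum>x\<in>partial_ncs k (h + k * s) h. card (fst x)) = block_total k h s"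
proof (induction "h + k * s" arbitrary: h s)
  case 0
  then show ?case using k by (simp add: partial_ncs_0)
next
  case (Suc M)
  note M = Suc_eq_add_mult_split[OF k Suc.hyps(2)]
  have IH: "(\<Sum>x\<in>partial_ncs k M h'. int (card (fst x))) = block_total k h' s'"
    if "M = h' + k * s'" for h' s'
    using Suc.hyps(1)[OF that] that by simp
  have IH_card: "int (card (partial_ncs k M h')) = ballot k h' s'" if "M = h' + k * s'" for h' s'
    using card_partial_ncs[OF k, of h' s'] that by simp
  have close: "(\<Sum>y\<in>partial_ncs k M h'. int (card (fst (close_block (Suc M) K y)))) =
      (\<Sum>y\<in>partial_ncs k M h'. int (card (fst y))) + int (card (partial_ncs k M h'))" for h' K
    by (simp add: card_fst_close_block sum.distrib)
  have "(\<Sum>x\<in>partial_ncs k (Suc M) h. int (card (fst x))) =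
      (if h = 0 then 0 else (\<Sum>y\<in>partial_ncs k M (h - 1). int (card (fst y)))) +
      (\<Sum>j=1..s. (\<Sum>y\<in>partial_ncs k M (h + k * j - 1). int (card (fst y))) +
                  int (card (partial_ncs k M (h + k * j - 1))))"
    using sum_partial_ncs_Suc[OF k Suc.hyps(2), of "\<lambda>x. int (card (fst x))"] by (simp add: close)
  also have "\<dots> = (if h = 0 then 0 else block_total k (h - 1) s) +
      (\<Sum>j=1..s. block_total k (h + k * j - 1) (s - j) + ballot k (h + k * j - 1) (s - j))"
    using IH[OF M(2)] IH[OF M(3)] IH_card[OF M(3)]
    by (intro arg_cong2[where f = "(+)"] sum.cong) auto
  also have "\<dots> = block_total k h s" using block_total_rec[OF k M(1)] by simp
  finally show ?case using Suc.hyps(2) by simp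
qed

lemma partial_ncs_no_open: "partial_ncs k (k * n) 0 = (\<lambda>P. (P, {})) ` NCk k n"
proof -
  have "Q = {}" if "(P, Q) \<in> partial_ncs k (k * n) 0" for P Q
    using partial_ncsD(2,3)[OF that] by simp
  then show ?thesis
    unfolding partial_ncs_def NCk_def partial_nc_no_open[symmetric] by auto
qed

theorem corollary2p4:
  fixes k n :: nat
  assumes "0 < k" and "0 < n"
  shows "(\<Sum>P\<in>NCk k n. card P) = (n * (k + 1) - 1) choose (n * k)"
proof -
  obtain n' where n: "n = Suc n'" using assms(2) gr0_implies_Suc by blast
  have "(\<Sum>P\<in>NCk k n. card P) = (\<Sum>x\<in>partial_ncs k (0 + k * n) 0. card (fst x))"
    unfolding add_0 partial_ncs_no_open by (simp add: sum.reindex inj_on_def)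
  also have "\<dots> = (k + (k + 1) * n') choose n'"
  proof -
    have "int (\<Sum>x\<in>partial_ncs k (0 + k * n) 0. card (fst x)) =
        int ((k + (k + 1) * n') choose n')"
      using sum_card_partial_ncs[OF assms(1), of 0 n] unfolding n by simp
    then show ?thesis by (simp only: of_nat_eq_iff)
  qed
  also have "(k + (k + 1) * n') choose n' = (n * (k + 1) - 1) choose (n * k)"
    using binomial_symmetric[of n' "k + (k + 1) * n'"] unfolding n by (simp add: algebra_simps)
  finally show ?thesis .
qed

end
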